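(* Consider a finite-horizon RMAB as in the context and let $\tilde V(\cdot,h):=\tilde V^N_{\tilde\pi^{N,*}}(\cdot,h)$ be the value function of the locally-SP-optimal policy in the Gaussian stochastic system. For all $1\le h\le H$ and all $\mathbf{x},\mathbf{x}'\in\mathcal{X}_{z_h\delta_N}$, \[ |\tilde V(\mathbf{x},h)-\tilde V(\mathbf{x}',h)|\le u_h\|\mathbf{x}-\mathbf{x}'\|_\infty+\mathcal{O}\big(N^{-\log N}\big), \] where $u_H=2r_{\max}S(S+1)$ and, for $H-1\ge h\ge1$, $u_h=2r_{\max}S(S+1)+\sqrt S\,u_{h+1}L_h(S+1)$.
   Context: RMAB: states $\mathcal{S}=\{1,\dots,S\}$, actions $\{0,1\}$ (so the number of actions is $2$), horizon $H$; kernels $\mathbf{P}_h(\cdot\mid s,a)$, rewards $r_h(s,a)\ge0$, $r_{\max}=\max r_h(s,a)$, $\mathbf{r}_h\in\mathbb{R}^{2S}$; budget $\alpha\in(0,1)$, $\alpha N\in\mathbb{N}$. States are fractions $\mathbf{x}\in\Delta^S$ of arms per state, actions $\mathbf{y}\in\Delta^{2S}$ fractions per state-action; $\mathcal{Y}_{\mathbf{x}}=\{\mathbf{y}\in\Delta^{2S}:\mathbf{y}(\cdot,0)+\mathbf{y}(\cdot,1)=\mathbf{x},\sum_sy(s,1)=\alpha\}$. Fluid LP: maximize $\sum_h\mathbf{r}_h\mathbf{y}_h^\top$ s.t. $\sum_sy_h(s,1)=\alpha$, $\mathbf{y}_h(\cdot,0)+\mathbf{y}_h(\cdot,1)=\mathbf{x}_h$,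 $\mathbf{y}_h\ge0$, $\mathbf{x}_1=\mathbf{x}_{\mathrm{ini}}$, $\mathbf{x}_{h+1}=\phi_h(\mathbf{y}_h)$, $\phi_h(\mathbf{y})(s')=\sum_{s,a}y(s,a)\mathbf{P}_h(s'\mid s,a)$; $(\mathbf{x}^*,\mathbf{y}^* )$ an optimal solution; $\sigma:=\inf_{\mathbf{y}\in\mathcal{U},\mathbf{y}\ne\mathbf{y}^*}\mathbf{r}(\mathbf{y}^*-\mathbf{y})^\top/\|\mathbf{y}^*-\mathbf{y}\|_\infty$ ($\mathcal{U}$ the LP feasible set, $\mathbf{r}=(\mathbf{r}_1,\dots,\mathbf{r}_H)$). Constants: $\delta_N=2\log N/\sqrt N$, $L_h$ the $\|\cdot\|_\infty$-Lipschitz constant of $\phi_h$, $\kappa=\max\{2+6S,3+2r_{\max}HS/\sigma\}$, $z_1=1$, $z_{h+1}=\sqrt S(\kappa L_hz_h+1)$. $\mathcal{X}_{z_h\delta_N}=\{\mathbf{x}\in\Delta^S:\|\mathbf{x}-\mathbf{x}^*_h\|_\infty\le z_h\delta_N\}$. $\Pi_{\delta_N}(\mathbf{y}^* )$: policies with $\|\pi(\mathbf{x},h)-\mathbf{y}^*_h\|_\infty\le\kappa z_h\delta_N$ whenever $\|\mathbf{x}-\mathbf{x}^*_h\|_\infty\le z_h\delta_N$, and equal to a fixed predefined policy otherwise. Gaussian stochastic system: state space $\Delta^S$; under action $\mathbf{y}_h\in\mathcal{Y}_{\tilde{\mathbf{X}}_h}$, $\tilde{\mathbf{X}}_{h+1}=\mathrm{Proj}_{\Delta^S}(\phi_h(\mathbf{y}_h)+\mathbf{Z}_h/\sqrt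 N)$ (Euclidean projection), $\mathbf{Z}_h\sim\mathcal{N}(\mathbf{0},\Gamma_h(\mathbf{y}^*_h))$ independent across $h$, $\Gamma_h(\mathbf{y}^*_h)=\sum_{s,a}y^*_h(s,a)\Sigma_h(s,a)$, $\Sigma_h(s,a)_{ij}=\mathbf{P}_h(i\mid s,a)(\mathbf{1}[i=j]-\mathbf{P}_h(j\mid s,a))$. $\tilde V^N_\pi(\mathbf{x},h)=\sum_{h'\ge h}\mathbb{E}[\mathbf{r}_{h'}\tilde{\mathbf{Y}}_{h'}^\top\mid\tilde{\mathbf{X}}_h=\mathbf{x}]$. Locally-SP-optimal policy $\tilde\pi^{N,*}\in\arg\max_{\pi\in\Pi_{\delta_N}(\mathbf{y}^* )}\tilde V^N_\pi$. The $\mathcal{O}(N^{-\log N})$ term has constants independent of $N$, $\mathbf{x},\mathbf{x}'$. *)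

theory Defs
  imports "HOL-Analysis.Analysis" "HOL-Probability.Probability"
begin

(* States: finite type 's (S = CARD('s)); actions: bool (False = 0, True = 1).
   State-action vectors live in real^('s \<times> bool). Time steps h \<in> {1..H}. *)

definition Delta :: "(real^'n::finite) set" where
  "Delta = {x. (\<forall>i. 0 \<le> x$i) \<and> (\<Sum>i\<in>UNIV. x$i) = 1}"

definition Yset :: "real \<Rightarrow> real^'s::finite \<Rightarrow> (real^('s \<times> bool)) set" where
  "Yset \<alpha> x = {y \<in> Delta. (\<forall>s. y$(s,False) + y$(s,True) = x$s) \<and> (\<Sum>s\<in>UNIV. y$(s,True)) = \<alpha>}"

(* P h s a s' = P_h(s' | s, a) *)
definition phi :: "(nat \<Rightarrow> 's::finite \<Rightarrow> bool \<Rightarrow> 's \<Rightarrow> real) \<Rightarrow> nat \<Rightarrow> real^('s \<times> bool) \<Rightarrow> real^'s" where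
  "phi P h y = (\<chi> s'. \<Sum>sa\<in>UNIV. y$sa * P h (fst sa) (snd sa) s')"

definition reward :: "(nat \<Rightarrow> 's::finite \<Rightarrow> bool \<Rightarrow> real) \<Rightarrow> nat \<Rightarrow> real^('s \<times> bool) \<Rightarrow> real" where
  "reward r h y = (\<Sum>sa\<in>UNIV. r h (fst sa) (snd sa) * y$sa)"

definition rmax :: "nat \<Rightarrow> (nat \<Rightarrow> 's::finite \<Rightarrow> bool \<Rightarrow> real) \<Rightarrow> real" where
  "rmax H r = Max ((\<lambda>(h,s,a). r h s a) ` ({1..H} \<times> UNIV \<times> UNIV))"

definition lp_feasible :: "nat \<Rightarrow> real \<Rightarrow> (nat \<Rightarrow> 's::finite \<Rightarrow> bool \<Rightarrow> 's \<Rightarrow> real) \<Rightarrow> real^'s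
    \<Rightarrow> (nat \<Rightarrow> real^'s) \<Rightarrow> (nat \<Rightarrow> real^('s \<times> bool)) \<Rightarrow> bool" where
  "lp_feasible H \<alpha> P xini x y \<longleftrightarrow> x 1 = xini \<and>
     (\<forall>h\<in>{1..H}. y h \<in> Yset \<alpha> (x h) \<and> x (Suc h) = phi P h (y h))"

definition lp_U :: "nat \<Rightarrow> real \<Rightarrow> (nat \<Rightarrow> 's::finite \<Rightarrow> bool \<Rightarrow> 's \<Rightarrow> real) \<Rightarrow> real^'s
    \<Rightarrow> (nat \<Rightarrow> real^('s \<times> bool)) set" where
  "lp_U H \<alpha> P xini = {y. (\<forall>h. h \<notin> {1..H} \<longrightarrow> y h = 0) \<and> (\<exists>x. lp_feasible H \<alpha> P xini x y)}"

definition lp_value :: "nat \<Rightarrow> (nat \<Rightarrow> 's::finite \<Rightarrow> bool \<Rightarrow> real) \<Rightarrow> (nat \<Rightarrow> real^('s \<times> bool)) \<Rightarrow> real" where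
  "lp_value H r y = (\<Sum>h=1..H. reward r h (y h))"

definition stack_norm :: "nat \<Rightarrow> (nat \<Rightarrow> real^('s::finite \<times> bool)) \<Rightarrow> real" where
  "stack_norm H y = Max ((\<lambda>h. infnorm (y h)) ` {1..H})"

definition sigma :: "nat \<Rightarrow> real \<Rightarrow> (nat \<Rightarrow> 's::finite \<Rightarrow> bool \<Rightarrow> 's \<Rightarrow> real) \<Rightarrow> real^'s
    \<Rightarrow> (nat \<Rightarrow> 's \<Rightarrow> bool \<Rightarrow> real) \<Rightarrow> (nat \<Rightarrow> real^('s \<times> bool)) \<Rightarrow> real" where
  "sigma H \<alpha> P xini r ys = Inf {lp_value H r (\<lambda>h. ys h - y h) / stack_norm H (\<lambda>h. ys h - y h) | y.
      y \<in> lp_U H \<alpha> P xini \<and> y \<noteq> ys}"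

definition lipconst :: "(nat \<Rightarrow> 's::finite \<Rightarrow> bool \<Rightarrow> 's \<Rightarrow> real) \<Rightarrow> nat \<Rightarrow> real" where
  "lipconst P h = Inf {L. 0 \<le> L \<and> (\<forall>y\<in>Delta. \<forall>y'\<in>Delta.
      infnorm (phi P h y - phi P h y') \<le> L * infnorm (y - y'))}"

definition kappa :: "nat \<Rightarrow> real \<Rightarrow> (nat \<Rightarrow> 's::finite \<Rightarrow> bool \<Rightarrow> 's \<Rightarrow> real) \<Rightarrow> real^'s
    \<Rightarrow> (nat \<Rightarrow> 's \<Rightarrow> bool \<Rightarrow> real) \<Rightarrow> (nat \<Rightarrow> real^('s \<times> bool)) \<Rightarrow> real" where
  "kappa H \<alpha> P xini r ys = max (2 + 6 * real CARD('s))
      (3 + 2 * rmax H r * real H * real CARD('s) / sigma H \<alpha> P xini r ys)"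

(* zaux S k L n = z_{n+1} *)
primrec zaux :: "real \<Rightarrow> real \<Rightarrow> (nat \<Rightarrow> real) \<Rightarrow> nat \<Rightarrow> real" where
  "zaux S k L 0 = 1"
| "zaux S k L (Suc n) = sqrt S * (k * L (Suc n) * zaux S k L n + 1)"

definition zfun :: "nat \<Rightarrow> real \<Rightarrow> (nat \<Rightarrow> 's::finite \<Rightarrow> bool \<Rightarrow> 's \<Rightarrow> real) \<Rightarrow> real^'s
    \<Rightarrow> (nat \<Rightarrow> 's \<Rightarrow> bool \<Rightarrow> real) \<Rightarrow> (nat \<Rightarrow> real^('s \<times> bool)) \<Rightarrow> nat \<Rightarrow> real" where
  "zfun H \<alpha> P xini r ys h = zaux (real CARD('s)) (kappa H \<alpha> P xini r ys) (lipconst P) (h - 1)"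

(* uaux c S L H k = u_{H-k} *)
primrec uaux :: "real \<Rightarrow> real \<Rightarrow> (nat \<Rightarrow> real) \<Rightarrow> nat \<Rightarrow> nat \<Rightarrow> real" where
  "uaux c S L H 0 = c"
| "uaux c S L H (Suc k) = c + sqrt S * uaux c S L H k * L (H - Suc k) * (S + 1)"

definition ufun :: "nat \<Rightarrow> (nat \<Rightarrow> 's::finite \<Rightarrow> bool \<Rightarrow> 's \<Rightarrow> real) \<Rightarrow> (nat \<Rightarrow> 's \<Rightarrow> bool \<Rightarrow> real) \<Rightarrow> nat \<Rightarrow> real" where
  "ufun H P r h = uaux (2 * rmax H r * real CARD('s) * (real CARD('s) + 1)) (real CARD('s))
      (lipconst P) H (H - h)"

definition deltaN :: "nat \<Rightarrow> real" where
  "deltaN N = 2 * ln (real N) / sqrt (real N)"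

definition Gamma :: "(nat \<Rightarrow> 's::finite \<Rightarrow> bool \<Rightarrow> 's \<Rightarrow> real) \<Rightarrow> nat \<Rightarrow> real^('s \<times> bool) \<Rightarrow> real^'s^'s" where
  "Gamma P h y = (\<chi> i j. \<Sum>sa\<in>UNIV. y$sa *
      (P h (fst sa) (snd sa) i * ((if i = j then 1 else 0) - P h (fst sa) (snd sa) j)))"

definition std_gauss :: "(real^'n::finite) measure" where
  "std_gauss = density lborel (\<lambda>x. ennreal (\<Prod>i\<in>UNIV. std_normal_density (x$i)))"

(* N(0, G): law of A w with w standard Gaussian and A A^T = G *)
definition gauss_cov :: "real^'n^'n::finite \<Rightarrow> (real^'n) measure" where
  "gauss_cov G = distr std_gauss borel (\<lambda>w. (SOME A :: real^'n^'n. A ** transpose A = G) *v w)"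

definition next_state :: "nat \<Rightarrow> (nat \<Rightarrow> 's::finite \<Rightarrow> bool \<Rightarrow> 's \<Rightarrow> real) \<Rightarrow> nat
    \<Rightarrow> real^('s \<times> bool) \<Rightarrow> real^'s \<Rightarrow> real^'s" where
  "next_state N P h y z = closest_point Delta (phi P h y + (1 / sqrt (real N)) *\<^sub>R z)"

(* Vaux ... k x = value with k steps remaining, i.e. at time h = H + 1 - k *)
fun Vaux :: "nat \<Rightarrow> nat \<Rightarrow> (nat \<Rightarrow> 's::finite \<Rightarrow> bool \<Rightarrow> 's \<Rightarrow> real) \<Rightarrow> (nat \<Rightarrow> 's \<Rightarrow> bool \<Rightarrow> real)
    \<Rightarrow> (nat \<Rightarrow> real^('s \<times> bool)) \<Rightarrow> (real^'s \<Rightarrow> nat \<Rightarrow> real^('s \<times> bool)) \<Rightarrow> nat \<Rightarrow> real^'s \<Rightarrow> real" where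
  "Vaux H N P r ys \<pi> 0 x = 0"
| "Vaux H N P r ys \<pi> (Suc k) x =
     (let h = H - k; y = \<pi> x h in
      reward r h y + (\<integral>z. Vaux H N P r ys \<pi> k (next_state N P h y z) \<partial>(gauss_cov (Gamma P h (ys h)))))"

definition Vtil :: "nat \<Rightarrow> nat \<Rightarrow> (nat \<Rightarrow> 's::finite \<Rightarrow> bool \<Rightarrow> 's \<Rightarrow> real) \<Rightarrow> (nat \<Rightarrow> 's \<Rightarrow> bool \<Rightarrow> real)
    \<Rightarrow> (nat \<Rightarrow> real^('s \<times> bool)) \<Rightarrow> (real^'s \<Rightarrow> nat \<Rightarrow> real^('s \<times> bool)) \<Rightarrow> nat \<Rightarrow> real^'s \<Rightarrow> real" where
  "Vtil H N P r ys \<pi> h x = Vaux H N P r ys \<pi> (Suc H - h) x"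

definition policy_valid :: "nat \<Rightarrow> real \<Rightarrow> (real^'s::finite \<Rightarrow> nat \<Rightarrow> real^('s \<times> bool)) \<Rightarrow> bool" where
  "policy_valid H \<alpha> \<pi> \<longleftrightarrow> (\<forall>h\<in>{1..H}. \<forall>x\<in>Delta. \<pi> x h \<in> Yset \<alpha> x) \<and>
     (\<forall>h. (\<lambda>x. \<pi> x h) \<in> borel_measurable borel)"

definition Pi_loc :: "nat \<Rightarrow> real \<Rightarrow> real \<Rightarrow> (nat \<Rightarrow> real) \<Rightarrow> real \<Rightarrow> (nat \<Rightarrow> real^'s::finite)
    \<Rightarrow> (nat \<Rightarrow> real^('s \<times> bool)) \<Rightarrow> (real^'s \<Rightarrow> nat \<Rightarrow> real^('s \<times> bool))
    \<Rightarrow> (real^'s \<Rightarrow> nat \<Rightarrow> real^('s \<times> bool)) set" where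
  "Pi_loc H \<alpha> k z \<delta> xs ys \<pi>0 = {\<pi>. policy_valid H \<alpha> \<pi> \<and>
     (\<forall>h\<in>{1..H}. \<forall>x\<in>Delta.
        (infnorm (x - xs h) \<le> z h * \<delta> \<longrightarrow> infnorm (\<pi> x h - ys h) \<le> k * z h * \<delta>) \<and>
        (\<not> infnorm (x - xs h) \<le> z h * \<delta> \<longrightarrow> \<pi> x h = \<pi>0 x h))}"

definition Pi_N :: "nat \<Rightarrow> real \<Rightarrow> (nat \<Rightarrow> 's::finite \<Rightarrow> bool \<Rightarrow> 's \<Rightarrow> real) \<Rightarrow> (nat \<Rightarrow> 's \<Rightarrow> bool \<Rightarrow> real)
    \<Rightarrow> real^'s \<Rightarrow> (nat \<Rightarrow> real^'s) \<Rightarrow> (nat \<Rightarrow> real^('s \<times> bool))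
    \<Rightarrow> (real^'s \<Rightarrow> nat \<Rightarrow> real^('s \<times> bool)) \<Rightarrow> nat \<Rightarrow> (real^'s \<Rightarrow> nat \<Rightarrow> real^('s \<times> bool)) set" where
  "Pi_N H \<alpha> P r xini xs ys \<pi>0 N =
     Pi_loc H \<alpha> (kappa H \<alpha> P xini r ys) (zfun H \<alpha> P xini r ys) (deltaN N) xs ys \<pi>0"

definition locally_SP_optimal :: "nat \<Rightarrow> real \<Rightarrow> (nat \<Rightarrow> 's::finite \<Rightarrow> bool \<Rightarrow> 's \<Rightarrow> real) \<Rightarrow> (nat \<Rightarrow> 's \<Rightarrow> bool \<Rightarrow> real)
    \<Rightarrow> real^'s \<Rightarrow> (nat \<Rightarrow> real^'s) \<Rightarrow> (nat \<Rightarrow> real^('s \<times> bool))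
    \<Rightarrow> (real^'s \<Rightarrow> nat \<Rightarrow> real^('s \<times> bool)) \<Rightarrow> nat \<Rightarrow> (real^'s \<Rightarrow> nat \<Rightarrow> real^('s \<times> bool)) \<Rightarrow> bool" where
  "locally_SP_optimal H \<alpha> P r xini xs ys \<pi>0 N \<pi> \<longleftrightarrow>
     \<pi> \<in> Pi_N H \<alpha> P r xini xs ys \<pi>0 N \<and>
     (\<forall>\<pi>'\<in>Pi_N H \<alpha> P r xini xs ys \<pi>0 N. \<forall>h\<in>{1..H}. \<forall>x\<in>Delta.
        Vtil H N P r ys \<pi>' h x \<le> Vtil H N P r ys \<pi> h x)"

end

theory Submission
  imports Defs
begin

text \<open>For \<open>x, x'\<close> in the neighbourhood, the action \<open>y = \<pi>(x, h)\<close> is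
  coupled with an action \<open>y'\<close> of \<open>Y_x'\<close> that stays within \<open>\<kappa> z_h \<delta>_N\<close> of \<open>y*_h\<close> and satisfies
  \<open>\<parallel>y - y'\<parallel> \<le> (S + 1) \<parallel>x - x'\<parallel>\<close>. Playing \<open>y'\<close> at the single state \<open>x'\<close> gives a policy in
  \<open>\<Pi>_\<delta>_N(y*)\<close>, so by optimality \<open>V(x', h)\<close> is at least the reward of \<open>y'\<close> plus the expected value
  at the successor of \<open>y'\<close>. Under the same noise \<open>Z\<close>, both successor states lie in the neighbourhood
  at time \<open>h + 1\<close> unless \<open>\<parallel>Z\<parallel>_\<infinity> > 2 log N\<close>; there the induction hypothesis applies, the projection
  onto the simplex being 1-Lipschitz for the Euclidean norm (a factor \<open>sqrt S\<close> in the sup norm).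
  The exceptional event has probability at most \<open>2^(S/2) N^(-log N)\<close> because every coordinate of
  \<open>Z\<close> has variance at most \<open>1/4\<close>, and all values lie in \<open>[0, H r_max]\<close>.\<close>

section \<open>Gaussian noise\<close>

lemma nn_integral_lborel_vec_prod:
  fixes g :: "real \<Rightarrow> ennreal"
  assumes [measurable]: "g \<in> borel_measurable borel"
  shows "(\<integral>\<^sup>+x. (\<Prod>i\<in>UNIV. g (x$i)) \<partial>(lborel::(real^'n::finite) measure)) = (\<integral>\<^sup>+t. g t \<partial>lborel) ^ CARD('n)"
proof -
  have prod_Basis: "(\<Prod>b\<in>Basis. g (x \<bullet> b)) = (\<Prod>i\<in>UNIV. g (x$i))" for x :: "real^'n"
  proof -
    have Basis_eq: "(Basis :: (real^'n) set) = range (\<lambda>i. axis i 1)"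
      unfolding Basis_vec_def by auto
    have "inj (\<lambda>i::'n. axis i (1::real))"
      by (auto simp: inj_def axis_eq_axis)
    then show ?thesis
      unfolding Basis_eq by (subst prod.reindex) (auto simp: inner_axis)
  qed
  have "(\<integral>\<^sup>+x. (\<Prod>b\<in>Basis. g (x \<bullet> b)) \<partial>(lborel::(real^'n) measure))
      = (\<Prod>b\<in>(Basis::(real^'n) set). \<integral>\<^sup>+t. g t \<partial>lborel)"
    by (rule nn_integral_lborel_prod) auto
  then show ?thesis
    by (simp add: prod_Basis)
qed

lemma sets_std_gauss [simp]: "sets std_gauss = sets borel"
  unfolding std_gauss_def by simp

lemma measurable_std_gauss [simp]: "measurable std_gauss M = measurable borel M"
  by (rule measurable_cong_sets) auto

lemma prob_space_std_gauss: "prob_space (std_gauss :: (real^'n::finite) measure)"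
proof
  have "(\<integral>\<^sup>+t. ennreal (std_normal_density t) \<partial>lborel) = 1"
    by (simp add: nn_integral_eq_integral)
  moreover have "emeasure (std_gauss :: (real^'n) measure) (space std_gauss)
      = (\<integral>\<^sup>+x. (\<Prod>i\<in>UNIV. ennreal (std_normal_density (x$i))) \<partial>(lborel::(real^'n) measure))"
    unfolding std_gauss_def by (simp add: emeasure_density prod_ennreal)
  ultimately show "emeasure (std_gauss :: (real^'n) measure) (space std_gauss) = 1"
    by (subst (asm) nn_integral_lborel_vec_prod) auto
qed

lemma nn_integral_std_normal_exp_quarter:
  "(\<integral>\<^sup>+t. ennreal (std_normal_density t * exp (t\<^sup>2/4)) \<partial>lborel) = ennreal (sqrt 2)"
proof -
  have density: "std_normal_density t * exp (t\<^sup>2/4) = sqrt 2 * normal_density 0 (sqrt 2) t" for t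
  proof -
    have "exp (- t\<^sup>2 / 2) * exp (t\<^sup>2/4) = exp (- t\<^sup>2 / 4)"
      by (simp add: exp_add[symmetric])
    moreover have "sqrt (2 * pi * (sqrt 2)\<^sup>2) = sqrt 2 * sqrt (2*pi)"
      by (simp add: real_sqrt_mult)
    ultimately show ?thesis
      by (simp add: std_normal_density_def normal_density_def field_simps)
  qed
  have "(\<integral>\<^sup>+t. ennreal (normal_density 0 (sqrt 2) t) \<partial>lborel) = 1"
    by (simp add: nn_integral_eq_integral)
  then show ?thesis
    by (simp add: density ennreal_mult nn_integral_cmult)
qed

text \<open>Chernoff bound with the weight \<open>exp (\<parallel>w\<parallel>\<^sup>2/4)\<close>, whose mean is \<open>sqrt 2\<close> per coordinate.\<close>

lemma std_gauss_norm_tail: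
  fixes t :: real
  shows "emeasure (std_gauss :: (real^'n::finite) measure) {w. t\<^sup>2 < (norm w)\<^sup>2}
     \<le> ennreal (sqrt 2 ^ CARD('n) * exp (- t\<^sup>2/4))"
proof -
  let ?M = "std_gauss :: (real^'n) measure"
  have weight: "exp (((norm w)\<^sup>2 - t\<^sup>2)/4) = exp (- t\<^sup>2/4) * (\<Prod>i\<in>UNIV. exp ((w$i)\<^sup>2/4))"
    for w :: "real^'n"
    by (simp add: norm_vec_def L2_set_def sum_nonneg exp_sum[symmetric] exp_add[symmetric]
        sum_divide_distrib diff_divide_distrib)
  have "emeasure ?M {w. t\<^sup>2 < (norm w)\<^sup>2} = (\<integral>\<^sup>+w. indicator {w. t\<^sup>2 < (norm w)\<^sup>2} w \<partial>?M)"
    by simp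
  also have "\<dots> \<le> (\<integral>\<^sup>+w. ennreal (exp (((norm w)\<^sup>2 - t\<^sup>2)/4)) \<partial>?M)"
    by (intro nn_integral_mono) (auto split: split_indicator)
  also have "\<dots> = (\<integral>\<^sup>+w. ennreal (\<Prod>i\<in>UNIV. std_normal_density (w$i))
      * ennreal (exp (((norm w)\<^sup>2 - t\<^sup>2)/4)) \<partial>(lborel::(real^'n) measure))"
    unfolding std_gauss_def by (subst nn_integral_density) (auto intro!: nn_integral_cong)
  also have "\<dots> = (\<integral>\<^sup>+w. ennreal (exp (- t\<^sup>2/4)) *
      (\<Prod>i\<in>UNIV. ennreal (std_normal_density (w$i) * exp ((w$i)\<^sup>2/4))) \<partial>(lborel::(real^'n) measure))"
    by (intro nn_integral_cong)
       (simp add: weight prod_ennreal prod.distrib ennreal_mult[symmetric] prod_nonneg mult_ac)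
  also have "\<dots> = ennreal (exp (- t\<^sup>2/4)) * ennreal (sqrt 2) ^ CARD('n)"
    by (subst nn_integral_cmult, simp, subst nn_integral_lborel_vec_prod)
       (auto simp: nn_integral_std_normal_exp_quarter)
  finally show ?thesis
    by (simp add: ennreal_mult[symmetric] ennreal_power mult.commute)
qed

text \<open>An isometry maps \<open>span (range u)\<close>, of dimension at most \<open>CARD('n)\<close>, into \<open>real^'n\<close>;
  the images of the \<open>u i\<close> are the rows of the factor.\<close>

lemma gram_matrix_factorization:
  fixes u :: "'n::finite \<Rightarrow> 'm::euclidean_space"
  shows "\<exists>A::real^'n^'n. \<forall>i j. (A ** transpose A)$i$j = u i \<bullet> u j"
proof -
  let ?W = "span (range u)"
  have "dim ?W \<le> card (range u)"
    by (rule dim_le_card) auto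
  also have "\<dots> \<le> CARD('n)"
    by (rule card_image_le) simp
  finally have "dim ?W \<le> dim (UNIV :: (real^'n) set)"
    by simp
  then obtain T :: "(real^'n) set" where T: "subspace T" "dim T = dim ?W"
    by (metis choose_subspace_of_subspace)
  obtain f g where f: "linear f" "f ` ?W = T" "\<And>x. x \<in> ?W \<Longrightarrow> norm (f x) = norm x"
    using isometries_subspaces[OF subspace_span T(1) T(2)[symmetric]] by metis
  have inner_f: "f a \<bullet> f b = a \<bullet> b" if "a \<in> ?W" "b \<in> ?W" for a b
  proof -
    have "a + b \<in> ?W"
      using that by (simp add: span_add)
    then have "norm (f (a + b)) = norm (a + b)"
      by (rule f(3))
    then have "(norm (f a + f b))\<^sup>2 = (norm (a + b))\<^sup>2"
      using f(1) by (simp add: linear_add)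
    moreover have "(norm (f a))\<^sup>2 = (norm a)\<^sup>2" "(norm (f b))\<^sup>2 = (norm b)\<^sup>2"
      using f(3) that by auto
    ultimately show ?thesis
      by (simp add: power2_norm_eq_inner inner_add_left inner_add_right inner_commute)
  qed
  define A :: "real^'n^'n" where "A = (\<chi> i. f (u i))"
  have "(A ** transpose A)$i$j = u i \<bullet> u j" for i j
  proof -
    have "(A ** transpose A)$i$j = f (u i) \<bullet> f (u j)"
      by (simp add: A_def matrix_matrix_mult_def transpose_def inner_vec_def)
    also have "\<dots> = u i \<bullet> u j"
      by (rule inner_f) (auto intro: span_base)
    finally show ?thesis .
  qed
  then show ?thesis
    by blast
qed

lemma sum_of_bool_eq_mult: "(\<Sum>j\<in>UNIV. of_bool (i = j) * f j) = (f i :: real)"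
  for i :: "'s::finite"
  by (simp add: of_bool_def if_distrib[of "\<lambda>c. c * _"] sum.If_cases)

lemma categorical_cov_eq_gram:
  fixes p :: "'s::finite \<Rightarrow> real"
  assumes "(\<Sum>s\<in>UNIV. p s) = 1"
  shows "(\<Sum>j\<in>UNIV. \<Sum>k\<in>UNIV. p j * p k / 2 *
            ((of_bool (i = j) - of_bool (i = k)) * (of_bool (l = j) - of_bool (l = k))))
       = p i * (of_bool (i = l) - p l)"
proof -
  define a where "a j = of_bool (i = j) * (of_bool (l = j) * p j)" for j
  define b where "b j = of_bool (i = j) * p j" for j
  define c where "c j = of_bool (l = j) * p j" for j
  have sums: "sum a UNIV = of_bool (i = l) * p i" "sum b UNIV = p i" "sum c UNIV = p l"
    unfolding a_def b_def c_def by (simp_all only: sum_of_bool_eq_mult eq_commute[of l i])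
  have "(\<Sum>j\<in>UNIV. \<Sum>k\<in>UNIV. p j * p k / 2 *
            ((of_bool (i = j) - of_bool (i = k)) * (of_bool (l = j) - of_bool (l = k))))
      = (\<Sum>j\<in>UNIV. \<Sum>k\<in>UNIV. (a j * p k + p j * a k - b j * c k - c j * b k) / 2)"
    by (intro sum.cong refl) (auto simp: a_def b_def c_def field_simps)
  also have "\<dots> = (sum a UNIV * sum p UNIV + sum p UNIV * sum a UNIV
                    - sum b UNIV * sum c UNIV - sum c UNIV * sum b UNIV) / 2"
    by (simp only: sum_divide_distrib[symmetric] sum.distrib sum_subtractf sum_product)
  also have "\<dots> = p i * (of_bool (i = l) - p l)"
    using assms by (simp add: sums field_simps)
  finally show ?thesis .
qed

text \<open>\<open>Gamma\<close> is the Gram matrix of the vectors indexed by \<open>((s, a), j, k)\<close> with entries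
  \<open>sqrt (y(s,a) P(j|s,a) P(k|s,a) / 2) (e\<^sub>j - e\<^sub>k)\<close>.\<close>

lemma Gamma_factorization:
  fixes P :: "nat \<Rightarrow> 's::finite \<Rightarrow> bool \<Rightarrow> 's \<Rightarrow> real"
  assumes y: "\<And>sa. 0 \<le> y$sa"
    and P_nonneg: "\<And>s a s'. 0 \<le> P h s a s'"
    and P_sum: "\<And>s a. (\<Sum>s'\<in>UNIV. P h s a s') = 1"
  shows "\<exists>A::real^'s^'s. A ** transpose A = Gamma P h y"
proof -
  define w :: "('s \<times> bool) \<times> 's \<times> 's \<Rightarrow> real" where
    "w c = y$(fst c) * P h (fst (fst c)) (snd (fst c)) (fst (snd c))
             * P h (fst (fst c)) (snd (fst c)) (snd (snd c)) / 2" for c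
  define u :: "'s \<Rightarrow> real^(('s \<times> bool) \<times> 's \<times> 's)" where
    "u i = (\<chi> c. sqrt (w c) * (of_bool (i = fst (snd c)) - of_bool (i = snd (snd c))))" for i
  have gram: "u i \<bullet> u l = Gamma P h y $ i $ l" for i l
  proof -
    have "u i \<bullet> u l = (\<Sum>c\<in>UNIV. w c * ((of_bool (i = fst (snd c)) - of_bool (i = snd (snd c)))
                                         * (of_bool (l = fst (snd c)) - of_bool (l = snd (snd c)))))"
    proof (unfold inner_vec_def, intro sum.cong refl)
      fix c
      have "sqrt (w c) * sqrt (w c) = w c"
        using y P_nonneg by (simp add: w_def)
      moreover have "(s * a) * (s * b) = (s * s) * (a * b)" for s a b :: real
        by (simp add: algebra_simps)
      ultimately show "u i $ c \<bullet> u l $ c = w c * ((of_bool (i = fst (snd c)) - of_bool (i = snd (snd c)))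
                                         * (of_bool (l = fst (snd c)) - of_bool (l = snd (snd c))))"
        by (simp add: u_def)
    qed
    also have "\<dots> = (\<Sum>sa\<in>UNIV. y$sa * (\<Sum>j\<in>UNIV. \<Sum>k\<in>UNIV.
        P h (fst sa) (snd sa) j * P h (fst sa) (snd sa) k / 2
          * ((of_bool (i = j) - of_bool (i = k)) * (of_bool (l = j) - of_bool (l = k)))))"
    proof -
      have "(\<Sum>c\<in>UNIV. w c * ((of_bool (i = fst (snd c)) - of_bool (i = snd (snd c)))
                                         * (of_bool (l = fst (snd c)) - of_bool (l = snd (snd c)))))
          = (\<Sum>sa\<in>UNIV. \<Sum>jk\<in>UNIV. w (sa, jk) * ((of_bool (i = fst jk) - of_bool (i = snd jk))
                                         * (of_bool (l = fst jk) - of_bool (l = snd jk))))"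
        by (simp add: sum.cartesian_product split_def)
      then show ?thesis
        by (simp add: w_def sum.cartesian_product split_def sum_distrib_left mult_ac)
    qed
    also have "\<dots> = Gamma P h y $ i $ l"
      by (simp only: categorical_cov_eq_gram[OF P_sum]) (simp add: Gamma_def of_bool_def)
    finally show ?thesis .
  qed
  obtain A :: "real^'s^'s" where "\<forall>i j. (A ** transpose A)$i$j = u i \<bullet> u j"
    using gram_matrix_factorization[of u] by blast
  then have "A ** transpose A = Gamma P h y"
    by (simp add: vec_eq_iff gram)
  then show ?thesis
    by blast
qed

lemma infnorm_cart_le: "(\<And>i. \<bar>(z::real^'n::finite)$i\<bar> \<le> B) \<Longrightarrow> infnorm z \<le> B"
  unfolding infnorm_cart by (rule cSup_least) auto

lemma Delta_nonneg: "x \<in> Delta \<Longrightarrow> 0 \<le> x$i"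
  by (simp add: Delta_def)

lemma Delta_sum: "x \<in> Delta \<Longrightarrow> (\<Sum>i\<in>UNIV. x$i) = 1"
  by (simp add: Delta_def)

lemma Gamma_diag_le:
  assumes y: "y \<in> Delta"
  shows "Gamma P h y $ i $ i \<le> 1/4"
proof -
  have quarter: "p * (1 - p) \<le> 1/4" for p :: real
    using sum_squares_ge_zero[of "p - 1/2" 0] by (simp add: algebra_simps power2_eq_square)
  have "Gamma P h y $ i $ i = (\<Sum>sa\<in>UNIV. y$sa * (P h (fst sa) (snd sa) i * (1 - P h (fst sa) (snd sa) i)))"
    by (simp add: Gamma_def)
  also have "\<dots> \<le> (\<Sum>sa\<in>UNIV. y$sa * (1/4))"
    by (intro sum_mono mult_left_mono quarter Delta_nonneg[OF y])
  also have "\<dots> = 1/4"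
    using Delta_sum[OF y] by (simp add: sum_distrib_right[symmetric] sum_divide_distrib[symmetric])
  finally show ?thesis .
qed

lemma sets_gauss_cov [simp]: "sets (gauss_cov G) = sets borel"
  unfolding gauss_cov_def by simp

lemma measurable_gauss_cov [simp]: "measurable (gauss_cov G) M = measurable borel M"
  by (rule measurable_cong_sets) auto

lemma borel_measurable_matrix_vector_mult [measurable]:
  "(\<lambda>w. (A::real^'n::finite^'m::finite) *v w) \<in> borel_measurable borel"
  by (intro borel_measurable_continuous_onI linear_continuous_on) simp

lemma borel_measurable_infnorm [measurable]: "(infnorm :: real^'n::finite \<Rightarrow> real) \<in> borel_measurable borel"
  by (intro borel_measurable_continuous_onI continuous_on_infnorm continuous_on_id)

lemma prob_space_gauss_cov: "prob_space (gauss_cov (G :: real^'n::finite^'n))"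
  unfolding gauss_cov_def
  by (intro prob_space.prob_space_distr prob_space_std_gauss) simp

text \<open>\<open>gauss_cov G\<close> uses a factor of \<open>G\<close> chosen by \<open>SOME\<close>, so one must exist for the law to be
  \<open>N(0, G)\<close>. Each row of the factor then has norm at most \<open>1/2\<close>.\<close>

lemma gauss_cov_infnorm_tail:
  fixes G :: "real^'n::finite^'n"
  assumes factor: "\<exists>A::real^'n^'n. A ** transpose A = G"
    and diag: "\<And>i. G$i$i \<le> 1/4" and t: "0 \<le> t"
  shows "measure (gauss_cov G) {z. t < infnorm z} \<le> sqrt 2 ^ CARD('n) * exp (- t\<^sup>2)"
proof -
  define A where "A = (SOME A :: real^'n^'n. A ** transpose A = G)"
  have AA: "A ** transpose A = G"
    unfolding A_def by (rule someI_ex[OF factor])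
  have row: "norm (A $ i) \<le> 1/2" for i
  proof -
    have "(norm (A $ i))\<^sup>2 = G $ i $ i"
      by (simp add: AA[symmetric] power2_norm_eq_inner inner_vec_def matrix_matrix_mult_def transpose_def)
    with diag[of i] have "(norm (A $ i))\<^sup>2 \<le> (1/2)\<^sup>2"
      by (simp add: power2_eq_square)
    then show ?thesis
      by (rule power2_le_imp_le) simp
  qed
  have contract: "infnorm (A *v w) \<le> norm w / 2" for w
  proof (rule infnorm_cart_le)
    fix i
    have "\<bar>(A *v w) $ i\<bar> \<le> norm (A $ i) * norm w"
      by (simp add: matrix_mult_dot Cauchy_Schwarz_ineq2)
    also have "\<dots> \<le> 1/2 * norm w"
      by (rule mult_right_mono[OF row]) simp
    finally show "\<bar>(A *v w) $ i\<bar> \<le> norm w / 2"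
      by simp
  qed
  have "(2*t)\<^sup>2 < (norm w)\<^sup>2" if "t < infnorm (A *v w)" for w
    using that contract[of w] t by (intro power_strict_mono) auto
  then have sub: "(\<lambda>w. A *v w) -` {z. t < infnorm z} \<inter> space std_gauss \<subseteq> {w. (2*t)\<^sup>2 < (norm w)\<^sup>2}"
    by auto
  have "emeasure (gauss_cov G) {z. t < infnorm z}
      = emeasure std_gauss ((\<lambda>w. A *v w) -` {z. t < infnorm z} \<inter> space std_gauss)"
    unfolding gauss_cov_def A_def[symmetric] by (rule emeasure_distr) (simp, measurable)
  also have "\<dots> \<le> emeasure (std_gauss :: (real^'n) measure) {w. (2*t)\<^sup>2 < (norm w)\<^sup>2}"
    by (rule emeasure_mono[OF sub]) simp
  also have "\<dots> \<le> ennreal (sqrt 2 ^ CARD('n) * exp (- t\<^sup>2))"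
    using std_gauss_norm_tail[of "2*t"] by (simp add: power2_eq_square)
  finally show ?thesis
    by (simp add: measure_def enn2real_leI)
qed

section \<open>The simplex and the dynamics\<close>

lemma closed_Delta: "closed (Delta :: (real^'n::finite) set)"
proof -
  have "Delta = (\<Inter>i. {x::real^'n. 0 \<le> x$i}) \<inter> {x. (\<Sum>i\<in>UNIV. x$i) = 1}"
    by (auto simp: Delta_def)
  moreover have "closed {x::real^'n. 0 \<le> x$i}" for i
    by (intro closed_Collect_le continuous_intros)
  moreover have "closed {x::real^'n. (\<Sum>i\<in>UNIV. x$i) = 1}"
    by (intro closed_Collect_eq continuous_intros)
  ultimately show ?thesis by (metis (no_types) closed_INT closed_Int)
qed

lemma convex_Delta: "convex (Delta :: (real^'n::finite) set)"
  unfolding convex_def Delta_def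
  by (auto simp: sum.distrib sum_distrib_left[symmetric])

lemma Delta_nonempty: "(Delta :: (real^'n::finite) set) \<noteq> {}"
proof -
  obtain i :: 'n where True by simp
  have "axis i 1 \<in> (Delta :: (real^'n) set)"
    by (auto simp: Delta_def axis_def)
  then show ?thesis by blast
qed

lemma infnorm_closest_point_Delta_le:
  fixes u v :: "real^'n::finite"
  shows "infnorm (closest_point Delta u - closest_point Delta v) \<le> sqrt (real CARD('n)) * infnorm (u - v)"
proof -
  have "infnorm (closest_point Delta u - closest_point Delta v) \<le> norm (closest_point Delta u - closest_point Delta v)"
    by (rule infnorm_le_norm)
  also have "\<dots> \<le> norm (u - v)"
    using closest_point_lipschitz[OF convex_Delta closed_Delta Delta_nonempty] by (simp add: dist_norm)
  also have "\<dots> \<le> sqrt (real CARD('n)) * infnorm (u - v)"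
    using norm_le_infnorm[of "u - v"] by simp
  finally show ?thesis .
qed

lemma next_state_in_Delta: "next_state N P h y z \<in> Delta"
  unfolding next_state_def by (rule closest_point_in_set[OF closed_Delta Delta_nonempty])

lemma continuous_on_next_state: "continuous_on UNIV (\<lambda>(y, z). next_state N P h y z)"
proof -
  have "continuous_on UNIV (phi P h)"
    unfolding phi_def by (intro continuous_on_vec_lambda continuous_intros)
  then have "continuous_on UNIV (\<lambda>(y, z). phi P h y + (1 / sqrt (real N)) *\<^sub>R z)"
    using continuous_on_compose2[OF _ continuous_on_fst[OF continuous_on_id]]
    by (auto intro!: continuous_intros simp: split_beta)
  moreover have "continuous_on UNIV (closest_point (Delta :: (real^'a) set))"
    by (rule continuous_on_closest_point[OF convex_Delta closed_Delta Delta_nonempty])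
  ultimately show ?thesis
    unfolding next_state_def
    by (auto intro: continuous_on_compose2[where g="closest_point Delta"] simp: case_prod_beta')
qed

lemma borel_measurable_next_state [measurable]:
  "(\<lambda>p. next_state N P h (fst p) (snd p)) \<in> borel_measurable borel"
  using borel_measurable_continuous_onI[OF continuous_on_next_state[of N P h]]
  by (simp add: case_prod_beta')

lemma phi_in_Delta:
  assumes y: "y \<in> Delta"
    and P_nonneg: "\<And>s a s'. 0 \<le> P h s a s'" and P_sum: "\<And>s a. (\<Sum>s'\<in>UNIV. P h s a s') = 1"
  shows "phi P h y \<in> Delta"
proof -
  have "(\<Sum>s'\<in>UNIV. \<Sum>sa\<in>UNIV. y$sa * P h (fst sa) (snd sa) s') = (\<Sum>sa\<in>UNIV. y$sa)"
    by (subst sum.swap) (simp add: sum_distrib_left[symmetric] P_sum)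
  then show ?thesis
    using y P_nonneg by (auto simp: phi_def Delta_def intro!: sum_nonneg)
qed

lemma Yset_D:
  assumes "y \<in> Yset \<alpha> x"
  shows "y \<in> Delta" "\<And>sa. 0 \<le> y$sa" "\<And>s. y$(s,False) + y$(s,True) = x$s"
    and "(\<Sum>s\<in>UNIV. y$(s,True)) = \<alpha>"
  using assms by (auto simp: Yset_def Delta_def)

lemma sum_pair_bool: "(\<Sum>sa\<in>UNIV. f sa) = (\<Sum>s\<in>UNIV. f (s, True) + f (s, False))"
proof -
  have "(\<Sum>sa\<in>UNIV. f sa) = (\<Sum>s\<in>UNIV. \<Sum>v\<in>UNIV. f (s, v))"
    by (simp add: sum.cartesian_product split_def)
  then show ?thesis
    by (simp add: UNIV_bool add.commute)
qed

lemma Yset_imp_Delta: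
  assumes y: "y \<in> Yset \<alpha> x"
  shows "x \<in> Delta"
proof -
  note y_facts = Yset_D[OF y]
  have "0 \<le> x$s" for s
    using y_facts(2)[of "(s,False)"] y_facts(2)[of "(s,True)"] y_facts(3)[of s] by linarith
  moreover have "(\<Sum>s\<in>UNIV. x$s) = (\<Sum>sa\<in>UNIV. y$sa)"
    by (simp add: sum_pair_bool y_facts(3)[symmetric] add.commute)
  ultimately show ?thesis
    using Delta_sum[OF y_facts(1)] by (simp add: Delta_def)
qed

lemma Yset_dist_iff:
  assumes "y \<in> Yset \<alpha> x"
  shows "infnorm (y - ys) \<le> \<rho> \<longleftrightarrow>
    (\<forall>s. \<bar>y$(s,True) - ys$(s,True)\<bar> \<le> \<rho> \<and> \<bar>x$s - y$(s,True) - ys$(s,False)\<bar> \<le> \<rho>)"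
proof -
  have "y$(s,False) = x$s - y$(s,True)" for s
    using Yset_D(3)[OF assms] by (simp add: algebra_simps)
  moreover have "infnorm (y - ys) \<le> \<rho> \<longleftrightarrow> (\<forall>sa. \<bar>y$sa - ys$sa\<bar> \<le> \<rho>)"
    by (metis component_le_infnorm_cart infnorm_cart_le order_trans vector_minus_component)
  ultimately show ?thesis
    by (metis (full_types) surj_pair)
qed

lemma Yset_exists_active:
  assumes x: "x \<in> Delta" and t: "\<And>s. 0 \<le> t s" "\<And>s. t s \<le> x$s" "(\<Sum>s\<in>UNIV. t s) = \<alpha>"
  shows "\<exists>y\<in>Yset \<alpha> x. \<forall>s. y$(s,True) = t s"
proof
  let ?y = "\<chi> sa. if snd sa then t (fst sa) else x$(fst sa) - t (fst sa)"
  have "(\<Sum>sa\<in>UNIV. ?y$sa) = 1"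
    using Delta_sum[OF x] by (simp add: sum_pair_bool)
  then show "?y \<in> Yset \<alpha> x"
    using t by (auto simp: Yset_def Delta_def)
qed simp

lemma abs_diff_component_le_infnorm: "\<bar>x$i - y$i\<bar> \<le> infnorm (x - y)"
  for x y :: "real^'n::finite"
  using component_le_infnorm_cart[of "x - y" i] by simp

section \<open>Rewards and value functions\<close>

lemma phi_lipschitz_bound:
  "\<exists>B\<ge>0. \<forall>y y'. infnorm (phi P h y - phi P h y') \<le> B * infnorm (y - y')"
proof (intro exI conjI allI)
  define B where "B = (\<Sum>sa\<in>UNIV. \<Sum>s'\<in>UNIV. \<bar>P h (fst sa) (snd sa) s'\<bar>)"
  show "0 \<le> B"
    unfolding B_def by (intro sum_nonneg) auto
  fix y y' :: "real^('a \<times> bool)"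
  show "infnorm (phi P h y - phi P h y') \<le> B * infnorm (y - y')"
  proof (rule infnorm_cart_le)
    fix s'
    have "\<bar>(phi P h y - phi P h y') $ s'\<bar> = \<bar>\<Sum>sa\<in>UNIV. (y - y')$sa * P h (fst sa) (snd sa) s'\<bar>"
      by (simp add: phi_def sum_subtractf left_diff_distrib)
    also have "\<dots> \<le> (\<Sum>sa\<in>UNIV. infnorm (y - y') * (\<Sum>s''\<in>UNIV. \<bar>P h (fst sa) (snd sa) s''\<bar>))"
      by (intro order_trans[OF sum_abs] sum_mono)
         (auto simp: abs_mult infnorm_pos_le intro!: mult_mono abs_diff_component_le_infnorm member_le_sum)
    also have "\<dots> = B * infnorm (y - y')"
      by (simp add: B_def sum_distrib_left mult.commute)
    finally show "\<bar>(phi P h y - phi P h y') $ s'\<bar> \<le> B * infnorm (y - y')" .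
  qed
qed

lemma lipconst_nonneg: "0 \<le> lipconst P h"
  unfolding lipconst_def using phi_lipschitz_bound[of P h] by (intro cInf_greatest) auto

lemma infnorm_phi_diff_le:
  assumes "y \<in> Delta" "y' \<in> Delta"
  shows "infnorm (phi P h y - phi P h y') \<le> lipconst P h * infnorm (y - y')"
proof (cases "y = y'")
  case False
  then have pos: "0 < infnorm (y - y')"
    by (simp add: infnorm_pos_lt)
  have "infnorm (phi P h y - phi P h y') / infnorm (y - y') \<le> lipconst P h"
    unfolding lipconst_def using phi_lipschitz_bound[of P h] assms pos
    by (intro cInf_greatest) (auto simp: divide_le_eq)
  then show ?thesis
    using pos by (simp add: divide_le_eq)
qed (simp add: infnorm_0)

lemma rmax_ge: "h \<in> {1..H} \<Longrightarrow> r h s a \<le> rmax H r"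
  unfolding rmax_def by (rule Max_ge) (auto intro: image_eqI[where x="(h,s,a)"])

lemma rmax_nonneg:
  fixes r :: "nat \<Rightarrow> 's::finite \<Rightarrow> bool \<Rightarrow> real"
  assumes "1 \<le> H" "\<And>h s a. h \<in> {1..H} \<Longrightarrow> 0 \<le> r h s a"
  shows "0 \<le> rmax H r"
proof -
  obtain s :: 's where True by simp
  have "0 \<le> r 1 s True"
    using assms by auto
  also have "\<dots> \<le> rmax H r"
    using assms by (intro rmax_ge) auto
  finally show ?thesis .
qed

lemma reward_diff_le:
  fixes r :: "nat \<Rightarrow> 's::finite \<Rightarrow> bool \<Rightarrow> real"
  assumes "\<And>s a. \<bar>r h s a\<bar> \<le> R"
  shows "reward r h y - reward r h y' \<le> 2 * R * real CARD('s) * infnorm (y - y')"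
proof -
  have "reward r h y - reward r h y' \<le> \<bar>\<Sum>sa\<in>UNIV. r h (fst sa) (snd sa) * (y - y')$sa\<bar>"
    by (simp add: reward_def sum_subtractf right_diff_distrib)
  also have "\<dots> \<le> (\<Sum>sa\<in>(UNIV::('s \<times> bool) set). R * infnorm (y - y'))"
    using assms[of undefined undefined]
    by (intro order_trans[OF sum_abs] sum_mono)
       (auto simp: abs_mult intro!: mult_mono assms abs_diff_component_le_infnorm)
  also have "\<dots> = 2 * R * real CARD('s) * infnorm (y - y')"
    by simp
  finally show ?thesis .
qed

lemma borel_measurable_reward [measurable]: "reward r h \<in> borel_measurable borel"
  unfolding reward_def by (intro borel_measurable_continuous_onI continuous_intros)

lemma reward_bounds:
  assumes y: "y \<in> Delta" and r: "\<And>s a. 0 \<le> r h s a" "\<And>s a. r h s a \<le> R"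
  shows "0 \<le> reward r h y" "reward r h y \<le> R"
proof -
  show "0 \<le> reward r h y"
    unfolding reward_def using r Delta_nonneg[OF y] by (intro sum_nonneg) auto
  have "reward r h y \<le> (\<Sum>sa\<in>UNIV. R * y$sa)"
    unfolding reward_def using r Delta_nonneg[OF y] by (intro sum_mono mult_right_mono) auto
  also have "\<dots> = R"
    using Delta_sum[OF y] by (simp add: sum_distrib_left[symmetric])
  finally show "reward r h y \<le> R" .
qed

text \<open>No integrability hypothesis is needed: a non-integrable function has Bochner integral \<open>0\<close>.\<close>

lemma (in prob_space) integral_le_const_nonneg:
  fixes c :: real
  assumes "\<And>x. f x \<le> c" and "0 \<le> c"
  shows "(\<integral>x. f x \<partial>M) \<le> c"
proof (cases "integrable M f")
  case True
  then show ?thesis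
    using assms(1) by (intro integral_le_const) auto
qed (simp add: not_integrable_integral_eq assms(2))

lemma Vaux_bounds:
  assumes \<pi>: "\<And>h x. h \<in> {1..H} \<Longrightarrow> x \<in> Delta \<Longrightarrow> \<pi> x h \<in> Delta"
    and r: "\<And>h s a. h \<in> {1..H} \<Longrightarrow> 0 \<le> r h s a" "\<And>h s a. h \<in> {1..H} \<Longrightarrow> r h s a \<le> R"
    and "0 \<le> R" and "k \<le> H" and "x \<in> Delta"
  shows "0 \<le> Vaux H N P r ys \<pi> k x \<and> Vaux H N P r ys \<pi> k x \<le> real k * R"
  using assms(5,6)
proof (induction k arbitrary: x)
  case (Suc k)
  let ?h = "H - k" and ?M = "gauss_cov (Gamma P (H - k) (ys (H - k)))"
  interpret prob_space ?M
    by (rule prob_space_gauss_cov)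
  have h: "?h \<in> {1..H}"
    using Suc.prems by auto
  have next_bounds: "0 \<le> Vaux H N P r ys \<pi> k (next_state N P ?h y z)"
    "Vaux H N P r ys \<pi> k (next_state N P ?h y z) \<le> real k * R" for y z
    using Suc.IH[OF _ next_state_in_Delta] Suc.prems by auto
  have "0 \<le> (\<integral>z. Vaux H N P r ys \<pi> k (next_state N P ?h (\<pi> x ?h) z) \<partial>?M)"
    using next_bounds by (intro integral_nonneg_AE) auto
  moreover have "(\<integral>z. Vaux H N P r ys \<pi> k (next_state N P ?h (\<pi> x ?h) z) \<partial>?M) \<le> real k * R"
    using next_bounds assms(4) by (intro integral_le_const_nonneg) auto
  moreover have "0 \<le> reward r ?h (\<pi> x ?h)" "reward r ?h (\<pi> x ?h) \<le> R"
    using reward_bounds[OF \<pi>[OF h Suc.prems(2)]] r[OF h] by auto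
  ultimately show ?case
    by (simp add: Let_def algebra_simps)
qed simp

lemma borel_measurable_Vaux [measurable]:
  fixes \<pi> :: "real^'s::finite \<Rightarrow> nat \<Rightarrow> real^('s \<times> bool)"
  assumes \<pi> [measurable]: "\<And>h. (\<lambda>x. \<pi> x h) \<in> borel_measurable borel"
  shows "Vaux H N P r ys \<pi> k \<in> borel_measurable borel"
proof (induction k)
  case (Suc k)
  let ?h = "H - k"
  interpret prob_space "gauss_cov (Gamma P ?h (ys ?h))"
    by (rule prob_space_gauss_cov)
  note [measurable] = Suc.IH
  have "(\<lambda>(x, z::real^'s). (\<pi> x ?h, z)) \<in> measurable (borel \<Otimes>\<^sub>M borel) borel"
    unfolding borel_prod[symmetric] by measurable
  from measurable_comp[OF this borel_measurable_next_state]
  have [measurable]: "(\<lambda>(x, z). Vaux H N P r ys \<pi> k (next_state N P ?h (\<pi> x ?h) z))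
      \<in> borel_measurable (borel \<Otimes>\<^sub>M gauss_cov (Gamma P ?h (ys ?h)))"
    by (simp add: o_def split_beta measurable_cong_sets[OF sets_pair_measure_cong[OF refl sets_gauss_cov] refl])
  have "(\<lambda>x. \<integral>z. Vaux H N P r ys \<pi> k (next_state N P ?h (\<pi> x ?h) z) \<partial>gauss_cov (Gamma P ?h (ys ?h)))
      \<in> borel_measurable borel"
    by (rule borel_measurable_lebesgue_integral[where f="\<lambda>x z. Vaux H N P r ys \<pi> k (next_state N P ?h (\<pi> x ?h) z)", simplified])
       measurable
  then show ?case
    by (simp add: Let_def)
qed simp

lemma Vtil_cong:
  assumes "\<And>x j. h \<le> j \<Longrightarrow> \<pi> x j = \<pi>' x j"
  shows "Vtil H N P r ys \<pi> h = Vtil H N P r ys \<pi>' h"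
proof -
  have "Vaux H N P r ys \<pi> k = Vaux H N P r ys \<pi>' k" if "k \<le> Suc H - h" for k
    using that
  proof (induction k)
    case (Suc k)
    then have "\<pi> x (H - k) = \<pi>' x (H - k)" for x
      by (intro assms) linarith
    with Suc show ?case
      by (simp add: fun_eq_iff Let_def)
  qed (simp add: fun_eq_iff)
  then show ?thesis
    by (simp add: Vtil_def fun_eq_iff)
qed

lemma Vtil_eq:
  assumes "h \<in> {1..H}"
  shows "Vtil H N P r ys \<pi> h x = reward r h (\<pi> x h) +
    (\<integral>z. Vtil H N P r ys \<pi> (Suc h) (next_state N P h (\<pi> x h) z) \<partial>gauss_cov (Gamma P h (ys h)))"
proof -
  have "Suc H - h = Suc (H - h)" "H - (H - h) = h"
    using assms by auto
  then show ?thesis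
    by (simp add: Vtil_def Let_def)
qed

section \<open>Coupling of actions\<close>

lemma redistribute_down:
  fixes c lo :: "'s::finite \<Rightarrow> real"
  assumes lo: "\<And>s. lo s \<le> c s" and sums: "(\<Sum>s\<in>UNIV. lo s) \<le> \<alpha>" "\<alpha> \<le> (\<Sum>s\<in>UNIV. c s)"
  shows "\<exists>t. (\<forall>s. lo s \<le> t s \<and> t s \<le> c s \<and> c s - t s \<le> (\<Sum>s\<in>UNIV. c s) - \<alpha>)
             \<and> (\<Sum>s\<in>UNIV. t s) = \<alpha>"
proof -
  define e where "e = (\<Sum>s\<in>UNIV. c s) - \<alpha>"
  define D where "D = (\<Sum>s\<in>UNIV. c s - lo s)"
  define \<theta> where "\<theta> = e / D"
  have e: "0 \<le> e" "e \<le> D"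
    using sums by (simp_all add: e_def D_def sum_subtractf)
  then have \<theta>: "0 \<le> \<theta>" "\<theta> \<le> 1" "\<theta> * D = e"
    by (auto simp: \<theta>_def divide_le_eq_1)
  define t where "t s = c s - \<theta> * (c s - lo s)" for s
  have "lo s \<le> t s \<and> t s \<le> c s \<and> c s - t s \<le> e" for s
  proof -
    have "c s - lo s \<le> D"
      unfolding D_def using lo by (intro member_le_sum) auto
    then have "\<theta> * (c s - lo s) \<le> e"
      using \<theta> by (metis mult_left_mono)
    moreover have "\<theta> * (c s - lo s) \<le> c s - lo s" "0 \<le> \<theta> * (c s - lo s)"
      using \<theta> lo[of s] by (auto intro: mult_left_le_one_le)
    ultimately show ?thesis
      by (auto simp: t_def)
  qed
  moreover have "(\<Sum>s\<in>UNIV. t s) = \<alpha>"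
    using \<theta>(3) by (simp add: t_def sum_subtractf sum_distrib_left[symmetric] D_def e_def)
  ultimately show ?thesis
    unfolding e_def by blast
qed

lemma redistribute:
  fixes c lo hi :: "'s::finite \<Rightarrow> real"
  assumes box: "\<And>s. lo s \<le> c s" "\<And>s. c s \<le> hi s"
    and sums: "(\<Sum>s\<in>UNIV. lo s) \<le> \<alpha>" "\<alpha> \<le> (\<Sum>s\<in>UNIV. hi s)"
  shows "\<exists>t. (\<forall>s. lo s \<le> t s \<and> t s \<le> hi s \<and> \<bar>t s - c s\<bar> \<le> \<bar>(\<Sum>s\<in>UNIV. c s) - \<alpha>\<bar>)
             \<and> (\<Sum>s\<in>UNIV. t s) = \<alpha>"
proof (cases "\<alpha> \<le> (\<Sum>s\<in>UNIV. c s)")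
  case True
  then obtain t where t: "\<And>s. lo s \<le> t s \<and> t s \<le> c s \<and> c s - t s \<le> (\<Sum>s\<in>UNIV. c s) - \<alpha>"
    and "(\<Sum>s\<in>UNIV. t s) = \<alpha>"
    using redistribute_down[of lo c \<alpha>] box sums by blast
  moreover have "t s \<le> hi s \<and> \<bar>t s - c s\<bar> \<le> \<bar>(\<Sum>s\<in>UNIV. c s) - \<alpha>\<bar>" for s
    using t[of s] box(2)[of s] by auto
  ultimately show ?thesis
    using t by blast
next
  case False
  then obtain t where t: "\<And>s. - hi s \<le> t s \<and> t s \<le> - c s \<and> - c s - t s \<le> (\<Sum>s\<in>UNIV. - c s) - (- \<alpha>)"
    and "(\<Sum>s\<in>UNIV. t s) = - \<alpha>"
    using redistribute_down[of "\<lambda>s. - hi s" "\<lambda>s. - c s" "- \<alpha>"] box sums by (auto simp: sum_negf)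
  moreover have "lo s \<le> - t s \<and> - t s \<le> hi s \<and> \<bar>- t s - c s\<bar> \<le> \<bar>(\<Sum>s\<in>UNIV. c s) - \<alpha>\<bar>" for s
    using t[of s] box(1)[of s] False by (auto simp: sum_negf)
  ultimately show ?thesis
    by (intro exI[of _ "\<lambda>s. - t s"]) (simp add: sum_negf)
qed

lemma Yset_active_bounds:
  assumes "y \<in> Yset \<alpha> x" and "infnorm (y - ys) \<le> \<rho>"
  shows "max (max 0 (ys$(s,True) - \<rho>)) (x$s - ys$(s,False) - \<rho>) \<le> y$(s,True)"
    and "y$(s,True) \<le> min (min (x$s) (ys$(s,True) + \<rho>)) (x$s - ys$(s,False) + \<rho>)"
proof -
  have "\<bar>y$(s,True) - ys$(s,True)\<bar> \<le> \<rho>" "\<bar>x$s - y$(s,True) - ys$(s,False)\<bar> \<le> \<rho>"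
    using Yset_dist_iff[OF assms(1)] assms(2) by auto
  then show "max (max 0 (ys$(s,True) - \<rho>)) (x$s - ys$(s,False) - \<rho>) \<le> y$(s,True)"
    and "y$(s,True) \<le> min (min (x$s) (ys$(s,True) + \<rho>)) (x$s - ys$(s,False) + \<rho>)"
    using Yset_D(2)[OF assms(1), of "(s,True)"] Yset_D(2)[OF assms(1), of "(s,False)"]
      Yset_D(3)[OF assms(1), of s]
    by (auto simp: abs_le_iff)
qed

lemma Yset_realize_active:
  fixes x x' :: "real^'s::finite" and y ys :: "real^('s \<times> bool)"
  assumes y: "y \<in> Yset \<alpha> x" and x': "x' \<in> Delta"
    and lo: "\<And>s. max (max 0 (ys$(s,True) - \<rho>)) (x'$s - ys$(s,False) - \<rho>) \<le> t s"
    and hi: "\<And>s. t s \<le> min (min (x'$s) (ys$(s,True) + \<rho>)) (x'$s - ys$(s,False) + \<rho>)"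
    and sum: "(\<Sum>s\<in>UNIV. t s) = \<alpha>"
    and close: "\<And>s. \<bar>t s - y$(s,True)\<bar> \<le> e" "\<And>s. \<bar>(x'$s - t s) - (x$s - y$(s,True))\<bar> \<le> e"
  shows "\<exists>y'\<in>Yset \<alpha> x'. infnorm (y' - ys) \<le> \<rho> \<and> infnorm (y' - y) \<le> e"
proof -
  obtain y' where y': "y' \<in> Yset \<alpha> x'" "\<And>s. y'$(s,True) = t s"
    using Yset_exists_active[of x' t \<alpha>] x' lo hi sum by fastforce
  have y'_False: "y'$(s,False) = x'$s - t s" and y_False: "y$(s,False) = x$s - y$(s,True)" for s
    using Yset_D(3)[OF y'(1)] Yset_D(3)[OF y] y'(2) by (simp_all add: algebra_simps)
  have "infnorm (y' - ys) \<le> \<rho>"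
    unfolding Yset_dist_iff[OF y'(1)]
  proof
    fix s
    show "\<bar>y'$(s,True) - ys$(s,True)\<bar> \<le> \<rho> \<and> \<bar>x'$s - y'$(s,True) - ys$(s,False)\<bar> \<le> \<rho>"
      using lo[of s] hi[of s] by (auto simp: y'(2) abs_le_iff)
  qed
  moreover have "infnorm (y' - y) \<le> e"
  proof (rule infnorm_cart_le)
    fix sa :: "'s \<times> bool"
    show "\<bar>(y' - y)$sa\<bar> \<le> e"
      using close[of "fst sa"] by (cases sa; cases "snd sa") (auto simp: y'(2) y'_False y_False)
  qed
  ultimately show ?thesis
    using y'(1) by blast
qed

text \<open>The active parts of \<open>y\<close> are clipped to the box of values that are admissible in
  \<open>Yset \<alpha> x'\<close> within distance \<open>\<rho>\<close> of \<open>ys\<close> (nonempty, as it contains the active part of \<open>y0\<close>),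
  which moves each of them by at most \<open>d = \<parallel>x - x'\<parallel>\<close>; restoring the budget with
  \<open>redistribute\<close> then costs at most \<open>S d\<close> per state.\<close>

lemma Yset_coupling:
  fixes x x' :: "real^'s::finite" and y ys y0 :: "real^('s \<times> bool)"
  assumes y: "y \<in> Yset \<alpha> x" "infnorm (y - ys) \<le> \<rho>"
    and y0: "y0 \<in> Yset \<alpha> x'" "infnorm (y0 - ys) \<le> \<rho>"
  shows "\<exists>y'\<in>Yset \<alpha> x'. infnorm (y' - ys) \<le> \<rho> \<and>
           infnorm (y' - y) \<le> (real CARD('s) + 1) * infnorm (x - x')"
proof -
  define d where "d = infnorm (x - x')"
  define lo where "lo s = max (max 0 (ys$(s,True) - \<rho>)) (x'$s - ys$(s,False) - \<rho>)" for s
  define hi where "hi s = min (min (x'$s) (ys$(s,True) + \<rho>)) (x'$s - ys$(s,False) + \<rho>)" for s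
  define t where "t s = y$(s,True)" for s
  define c where "c s = max (lo s) (min (hi s) (t s))" for s
  have dx: "\<bar>x'$s - x$s\<bar> \<le> d" for s
    using abs_diff_component_le_infnorm[of x s x'] by (simp add: d_def abs_minus_commute)
  note t = Yset_active_bounds[OF y, folded t_def]
  note y0_box = Yset_active_bounds[OF y0, folded lo_def hi_def]
  have c_box: "lo s \<le> c s" "c s \<le> hi s" for s
    using y0_box[of s] by (auto simp: c_def)
  have c_close: "\<bar>c s - t s\<bar> \<le> d" "\<bar>(x'$s - c s) - (x$s - t s)\<bar> \<le> d" for s
    using t[of s] dx[of s] y0_box[of s] unfolding c_def lo_def hi_def
    by (auto simp: abs_le_iff max_def min_def split: if_splits)
  have "(\<Sum>s\<in>UNIV. lo s) \<le> \<alpha>" "\<alpha> \<le> (\<Sum>s\<in>UNIV. hi s)"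
    using y0_box by (auto intro: sum_mono simp flip: Yset_D(4)[OF y0(1)])
  then obtain t' where t': "\<And>s. lo s \<le> t' s \<and> t' s \<le> hi s \<and> \<bar>t' s - c s\<bar> \<le> \<bar>(\<Sum>s\<in>UNIV. c s) - \<alpha>\<bar>"
    and t'_sum: "(\<Sum>s\<in>UNIV. t' s) = \<alpha>"
    using redistribute[of lo c hi, OF c_box] by blast
  have "\<bar>(\<Sum>s\<in>UNIV. c s) - \<alpha>\<bar> = \<bar>\<Sum>s\<in>UNIV. c s - t s\<bar>"
    using Yset_D(4)[OF y(1)] by (simp add: sum_subtractf t_def)
  also have "\<dots> \<le> (\<Sum>s\<in>(UNIV::'s set). d)"
    using c_close(1) by (intro order_trans[OF sum_abs] sum_mono)
  also have "\<dots> = real CARD('s) * d"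
    by simp
  finally have t'_close: "\<bar>t' s - c s\<bar> \<le> real CARD('s) * d" for s
    using t'[of s] by linarith
  show ?thesis
    unfolding d_def[symmetric]
  proof (rule Yset_realize_active[OF y(1) Yset_imp_Delta[OF y0(1)]])
    show "max (max 0 (ys$(s,True) - \<rho>)) (x'$s - ys$(s,False) - \<rho>) \<le> t' s"
      and "t' s \<le> min (min (x'$s) (ys$(s,True) + \<rho>)) (x'$s - ys$(s,False) + \<rho>)" for s
      using t'[of s] by (simp_all add: lo_def hi_def)
    show "\<bar>t' s - y$(s,True)\<bar> \<le> (real CARD('s) + 1) * d"
      and "\<bar>(x'$s - t' s) - (x$s - y$(s,True))\<bar> \<le> (real CARD('s) + 1) * d" for s
      using t'_close[of s] c_close[of s] by (auto simp: t_def abs_le_iff algebra_simps)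
  qed (rule t'_sum)
qed

lemma borel_measurable_next_state_noise [measurable]:
  "(\<lambda>z. next_state N P h y z) \<in> borel_measurable borel"
proof (rule borel_measurable_continuous_onI)
  show "continuous_on UNIV (\<lambda>z. next_state N P h y z)"
    using continuous_on_compose2[OF continuous_on_next_state[of N P h]
        continuous_on_Pair[OF continuous_on_const continuous_on_id]]
    by simp
qed

lemma borel_measurable_Vtil [measurable]:
  assumes "\<And>h. (\<lambda>x. \<pi> x h) \<in> borel_measurable borel"
  shows "Vtil H N P r ys \<pi> h \<in> borel_measurable borel"
  unfolding Vtil_def using borel_measurable_Vaux[OF assms] by (simp add: fun_eq_iff[symmetric])

lemma (in prob_space) integral_diff_le_off_event:
  fixes f g :: "'a \<Rightarrow> real"
  assumes f: "integrable M f" and g: "integrable M g" and T: "T \<in> events"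
    and everywhere: "\<And>z. f z - g z \<le> A + B" and off_T: "\<And>z. z \<notin> T \<Longrightarrow> f z - g z \<le> A"
  shows "(\<integral>z. f z \<partial>M) - (\<integral>z. g z \<partial>M) \<le> A + B * prob T"
proof -
  have indicator_T: "integrable M (\<lambda>z. B * indicator T z)"
    using T by (intro integrable_mult_right integrable_real_indicator) (auto simp: emeasure_finite less_top[symmetric])
  have "(\<integral>z. f z \<partial>M) - (\<integral>z. g z \<partial>M) = (\<integral>z. f z - g z \<partial>M)"
    using f g by simp
  also have "\<dots> \<le> (\<integral>z. A + B * indicator T z \<partial>M)"
    using f g indicator_T everywhere off_T by (intro integral_mono) (auto split: split_indicator)
  also have "\<dots> = A + B * prob T"
    using indicator_T T by (simp add: prob_space Int_absorb2 sets.sets_into_space)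
  finally show ?thesis .
qed

lemma zfun_Suc:
  fixes P :: "nat \<Rightarrow> 's::finite \<Rightarrow> bool \<Rightarrow> 's \<Rightarrow> real"
  assumes "1 \<le> h"
  shows "zfun H \<alpha> P xini r ys (Suc h) =
    sqrt (real CARD('s)) * (kappa H \<alpha> P xini r ys * lipconst P h * zfun H \<alpha> P xini r ys h + 1)"
  using assms unfolding zfun_def by (cases h) auto

lemma ufun_last:
  fixes P :: "nat \<Rightarrow> 's::finite \<Rightarrow> bool \<Rightarrow> 's \<Rightarrow> real"
  shows "ufun H P r H = 2 * rmax H r * real CARD('s) * (real CARD('s) + 1)"
  unfolding ufun_def by simp

lemma ufun_Suc:
  fixes P :: "nat \<Rightarrow> 's::finite \<Rightarrow> bool \<Rightarrow> 's \<Rightarrow> real"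
  assumes "h < H"
  shows "ufun H P r h = 2 * rmax H r * real CARD('s) * (real CARD('s) + 1)
     + sqrt (real CARD('s)) * ufun H P r (Suc h) * lipconst P h * (real CARD('s) + 1)"
proof -
  have "H - h = Suc (H - Suc h)" "H - Suc (H - Suc h) = h"
    using assms by auto
  then show ?thesis
    unfolding ufun_def by simp
qed

lemma ufun_nonneg:
  fixes P :: "nat \<Rightarrow> 's::finite \<Rightarrow> bool \<Rightarrow> 's \<Rightarrow> real"
  assumes "0 \<le> rmax H r"
  shows "0 \<le> ufun H P r h"
proof -
  have "0 \<le> uaux (2 * rmax H r * real CARD('s) * (real CARD('s) + 1)) (real CARD('s)) (lipconst P) H k" for k
    using assms by (induction k) (auto simp: lipconst_nonneg)
  then show ?thesis
    unfolding ufun_def .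
qed

section \<open>The Lipschitz estimate\<close>

locale rmab_fluid_path =
  fixes H :: nat and \<alpha> :: real
    and P :: "nat \<Rightarrow> 's::finite \<Rightarrow> bool \<Rightarrow> 's \<Rightarrow> real"
    and r :: "nat \<Rightarrow> 's \<Rightarrow> bool \<Rightarrow> real"
    and xini :: "real^'s"
    and xs :: "nat \<Rightarrow> real^'s" and ys :: "nat \<Rightarrow> real^('s \<times> bool)"
    and \<pi>0 :: "real^'s \<Rightarrow> nat \<Rightarrow> real^('s \<times> bool)"
  assumes H_pos: "1 \<le> H"
    and P_nonneg: "\<And>h s a s'. h \<in> {1..H} \<Longrightarrow> 0 \<le> P h s a s'"
    and P_sum: "\<And>h s a. h \<in> {1..H} \<Longrightarrow> (\<Sum>s'\<in>UNIV. P h s a s') = 1"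
    and r_nonneg: "\<And>h s a. h \<in> {1..H} \<Longrightarrow> 0 \<le> r h s a"
    and LP_feas: "lp_feasible H \<alpha> P xini xs ys"
begin

abbreviation "V N \<pi> \<equiv> Vtil H N P r ys \<pi>"

abbreviation "optimal N \<pi> \<equiv> locally_SP_optimal H \<alpha> P r xini xs ys \<pi>0 N \<pi>"

abbreviation "noise h \<equiv> gauss_cov (Gamma P h (ys h))"

abbreviation "rad N h \<equiv> kappa H \<alpha> P xini r ys * zfun H \<alpha> P xini r ys h * deltaN N"

text \<open>\<open>nbhd N h\<close> is the paper's \<open>X_(z_h \<delta>_N)\<close>; on it a policy in \<open>Pi_N\<close> plays within \<open>rad N h\<close>
  of \<open>ys h\<close>.\<close>

definition nbhd :: "nat \<Rightarrow> nat \<Rightarrow> (real^'s) set" where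
  "nbhd N h = {x \<in> Delta. infnorm (x - xs h) \<le> zfun H \<alpha> P xini r ys h * deltaN N}"

lemma ys_in_Yset: "h \<in> {1..H} \<Longrightarrow> ys h \<in> Yset \<alpha> (xs h)"
  and xs_Suc: "h \<in> {1..H} \<Longrightarrow> xs (Suc h) = phi P h (ys h)"
  using LP_feas by (auto simp: lp_feasible_def)

lemma rmax_H_r_nonneg: "0 \<le> rmax H r"
  using rmax_nonneg[OF H_pos r_nonneg] .

lemma optimalD:
  assumes "optimal N \<pi>"
  shows "\<And>h x. h \<in> {1..H} \<Longrightarrow> x \<in> Delta \<Longrightarrow> \<pi> x h \<in> Yset \<alpha> x"
    and "\<And>h. (\<lambda>x. \<pi> x h) \<in> borel_measurable borel"
    and "\<And>h x. h \<in> {1..H} \<Longrightarrow> x \<in> nbhd N h \<Longrightarrow> infnorm (\<pi> x h - ys h) \<le> rad N h"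
  using assms
  by (auto simp: locally_SP_optimal_def Pi_N_def Pi_loc_def policy_valid_def nbhd_def)

lemma Vtil_Suc_bounds:
  assumes "optimal N \<pi>" and "h \<in> {1..H}" and "x \<in> Delta"
  shows "0 \<le> V N \<pi> (Suc h) x" and "V N \<pi> (Suc h) x \<le> real H * rmax H r"
proof -
  have "V N \<pi> (Suc h) x = Vaux H N P r ys \<pi> (H - h) x"
    by (simp add: Vtil_def)
  moreover have "0 \<le> Vaux H N P r ys \<pi> (H - h) x \<and> Vaux H N P r ys \<pi> (H - h) x \<le> real (H - h) * rmax H r"
    using assms rmax_H_r_nonneg r_nonneg rmax_ge[of _ H r] Yset_D(1)[OF optimalD(1)[OF assms(1)]]
    by (intro Vaux_bounds) auto
  moreover have "real (H - h) * rmax H r \<le> real H * rmax H r"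
    using rmax_H_r_nonneg by (intro mult_right_mono) auto
  ultimately show "0 \<le> V N \<pi> (Suc h) x" "V N \<pi> (Suc h) x \<le> real H * rmax H r"
    by auto
qed

lemma deviation_le_Vtil:
  assumes opt: "optimal N \<pi>" and h: "h \<in> {1..H}" and x': "x' \<in> nbhd N h"
    and y': "y' \<in> Yset \<alpha> x'" "infnorm (y' - ys h) \<le> rad N h"
  shows "reward r h y' + (\<integral>z. V N \<pi> (Suc h) (next_state N P h y' z) \<partial>noise h) \<le> V N \<pi> h x'"
proof -
  define \<pi>' where "\<pi>' = (\<lambda>v j. if v = x' \<and> j = h then y' else \<pi> v j)"
  note [measurable] = optimalD(2)[OF opt]
  have "policy_valid H \<alpha> \<pi>'"
    using optimalD(1)[OF opt] y'(1)
    by (auto simp: policy_valid_def \<pi>'_def)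
  then have "\<pi>' \<in> Pi_N H \<alpha> P r xini xs ys \<pi>0 N"
    using opt x' y'(2) by (auto simp: locally_SP_optimal_def Pi_N_def Pi_loc_def \<pi>'_def nbhd_def)
  then have "V N \<pi>' h x' \<le> V N \<pi> h x'"
    using opt h x' by (auto simp: locally_SP_optimal_def nbhd_def)
  moreover have "V N \<pi>' (Suc h) = V N \<pi> (Suc h)"
    by (rule Vtil_cong) (simp add: \<pi>'_def)
  ultimately show ?thesis
    using Vtil_eq[OF h, of N P r ys \<pi>' x'] by (simp add: \<pi>'_def)
qed

lemma next_state_in_nbhd:
  assumes h: "h \<in> {1..H}" and y: "y \<in> Delta" "infnorm (y - ys h) \<le> rad N h"
    and z: "infnorm z \<le> 2 * ln (real N)"
  shows "next_state N P h y z \<in> nbhd N (Suc h)"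
proof -
  let ?L = "lipconst P h"
  have ys: "ys h \<in> Delta"
    using Yset_D(1)[OF ys_in_Yset[OF h]] .
  have xs: "closest_point Delta (xs (Suc h)) = xs (Suc h)"
    using phi_in_Delta[OF ys] P_nonneg[OF h] P_sum[OF h]
    by (simp add: xs_Suc[OF h] closest_point_self)
  have "infnorm (phi P h y - xs (Suc h)) \<le> ?L * rad N h"
    using infnorm_phi_diff_le[OF y(1) ys, of P h] mult_left_mono[OF y(2) lipconst_nonneg[of P h]]
    by (simp add: xs_Suc[OF h])
  moreover have "infnorm ((1 / sqrt (real N)) *\<^sub>R z) \<le> deltaN N"
    using z by (simp add: infnorm_mul deltaN_def divide_right_mono)
  ultimately have "infnorm (phi P h y + (1 / sqrt (real N)) *\<^sub>R z - xs (Suc h)) \<le> ?L * rad N h + deltaN N"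
    using infnorm_triangle[of "phi P h y - xs (Suc h)" "(1 / sqrt (real N)) *\<^sub>R z"]
    by (simp add: algebra_simps)
  then have "infnorm (next_state N P h y z - xs (Suc h)) \<le> sqrt (real CARD('s)) * (?L * rad N h + deltaN N)"
    using infnorm_closest_point_Delta_le[of "phi P h y + (1 / sqrt (real N)) *\<^sub>R z" "xs (Suc h)"]
    unfolding next_state_def xs by (auto intro: order_trans mult_left_mono)
  also have "\<dots> = zfun H \<alpha> P xini r ys (Suc h) * deltaN N"
    using h by (simp add: zfun_Suc algebra_simps)
  finally show ?thesis
    by (simp add: nbhd_def next_state_in_Delta)
qed

lemma noise_infnorm_tail:
  assumes h: "h \<in> {1..H}" and N: "1 \<le> N"
  shows "measure (noise h) {z. 2 * ln (real N) < infnorm z} \<le> sqrt 2 ^ CARD('s) * real N powr (- ln (real N))"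
proof -
  have ys: "ys h \<in> Delta"
    using Yset_D(1)[OF ys_in_Yset[OF h]] .
  have "measure (noise h) {z. 2 * ln (real N) < infnorm z} \<le> sqrt 2 ^ CARD('s) * exp (- (2 * ln (real N))\<^sup>2)"
    using Gamma_factorization[of "ys h" P h] Delta_nonneg[OF ys] P_nonneg[OF h] P_sum[OF h] N
    by (intro gauss_cov_infnorm_tail Gamma_diag_le[OF ys]) auto
  also have "exp (- (2 * ln (real N))\<^sup>2) \<le> real N powr (- ln (real N))"
    using N by (simp add: powr_def power2_eq_square)
  finally show ?thesis
    by (simp add: mult_left_mono)
qed

lemma continuation_diff_le:
  assumes h: "h \<in> {1..H}"
    and y: "y \<in> Delta" "infnorm (y - ys h) \<le> rad N h"
    and y': "y' \<in> Delta" "infnorm (y' - ys h) \<le> rad N h"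
    and z: "infnorm z \<le> 2 * ln (real N)" and u: "0 \<le> u"
    and next_lip: "\<And>v v'. v \<in> nbhd N (Suc h) \<Longrightarrow> v' \<in> nbhd N (Suc h) \<Longrightarrow>
        V N \<pi> (Suc h) v - V N \<pi> (Suc h) v' \<le> u * infnorm (v - v') + E"
  shows "V N \<pi> (Suc h) (next_state N P h y z) - V N \<pi> (Suc h) (next_state N P h y' z)
      \<le> u * (sqrt (real CARD('s)) * lipconst P h * infnorm (y - y')) + E"
proof -
  have "infnorm (next_state N P h y z - next_state N P h y' z)
      \<le> sqrt (real CARD('s)) * lipconst P h * infnorm (y - y')"
    using infnorm_closest_point_Delta_le[of "phi P h y + (1 / sqrt (real N)) *\<^sub>R z"
        "phi P h y' + (1 / sqrt (real N)) *\<^sub>R z"] infnorm_phi_diff_le[OF y(1) y'(1), of P h]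
    unfolding next_state_def by (auto intro: order_trans mult_left_mono simp: mult.assoc)
  then show ?thesis
    using next_lip[OF next_state_in_nbhd[OF h y z] next_state_in_nbhd[OF h y' z]] mult_left_mono[OF _ u]
    by (meson add_right_mono order_trans)
qed

lemma expected_continuation_diff_le:
  assumes opt: "optimal N \<pi>" and N: "1 \<le> N" and h: "h \<in> {1..H}"
    and y: "y \<in> Delta" "infnorm (y - ys h) \<le> rad N h"
    and y': "y' \<in> Delta" "infnorm (y' - ys h) \<le> rad N h"
    and u: "0 \<le> u" and E: "0 \<le> E"
    and next_lip: "\<And>v v'. v \<in> nbhd N (Suc h) \<Longrightarrow> v' \<in> nbhd N (Suc h) \<Longrightarrow>
        V N \<pi> (Suc h) v - V N \<pi> (Suc h) v' \<le> u * infnorm (v - v') + E"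
  shows "(\<integral>z. V N \<pi> (Suc h) (next_state N P h y z) \<partial>noise h)
           - (\<integral>z. V N \<pi> (Suc h) (next_state N P h y' z) \<partial>noise h)
    \<le> u * (sqrt (real CARD('s)) * lipconst P h * infnorm (y - y')) + E
      + real H * rmax H r * (sqrt 2 ^ CARD('s) * real N powr (- ln (real N)))"
proof -
  interpret prob_space "noise h"
    by (rule prob_space_gauss_cov)
  note [measurable] = optimalD(2)[OF opt]
  define f where "f v z = V N \<pi> (Suc h) (next_state N P h v z)" for v z
  define T where "T = {z::real^'s. 2 * ln (real N) < infnorm z}"
  define A where "A = u * (sqrt (real CARD('s)) * lipconst P h * infnorm (y - y')) + E"
  have bounds: "0 \<le> f v z" "f v z \<le> real H * rmax H r" for v z
    using Vtil_Suc_bounds[OF opt h next_state_in_Delta] by (simp_all add: f_def)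
  have integrable: "integrable (noise h) (f v)" for v
  proof (rule integrable_const_bound)
    show "AE z in noise h. norm (f v z) \<le> real H * rmax H r"
      using bounds by simp
    show "f v \<in> borel_measurable (noise h)"
      unfolding f_def by simp measurable
  qed
  have "(\<integral>z. f y z \<partial>noise h) - (\<integral>z. f y' z \<partial>noise h) \<le> A + real H * rmax H r * prob T"
  proof (rule integral_diff_le_off_event[OF integrable integrable])
    show "T \<in> events"
      unfolding T_def by simp measurable
    have "0 \<le> A"
      using u E lipconst_nonneg[of P h] by (simp add: A_def infnorm_pos_le)
    then show "f y z - f y' z \<le> A + real H * rmax H r" for z
      using bounds[of y z] bounds[of y' z] by linarith
    show "f y z - f y' z \<le> A" if "z \<notin> T" for z
      using that continuation_diff_le[OF h y y' _ u] next_lip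
      unfolding f_def A_def T_def by (simp add: not_less)
  qed
  moreover have "real H * rmax H r * prob T
      \<le> real H * rmax H r * (sqrt 2 ^ CARD('s) * real N powr (- ln (real N)))"
    using noise_infnorm_tail[OF h N] rmax_H_r_nonneg by (intro mult_left_mono) (auto simp: T_def)
  ultimately show ?thesis
    unfolding f_def A_def by linarith
qed

lemma Vtil_diff_le_step:
  assumes opt: "optimal N \<pi>" and N: "1 \<le> N" and h: "h \<in> {1..H}"
    and x: "x \<in> nbhd N h" and x': "x' \<in> nbhd N h" and u: "0 \<le> u" and E: "0 \<le> E"
    and next_lip: "\<And>v v'. v \<in> nbhd N (Suc h) \<Longrightarrow> v' \<in> nbhd N (Suc h) \<Longrightarrow>
        V N \<pi> (Suc h) v - V N \<pi> (Suc h) v' \<le> u * infnorm (v - v') + E"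
  shows "V N \<pi> h x - V N \<pi> h x'
    \<le> (2 * rmax H r * real CARD('s) * (real CARD('s) + 1)
        + sqrt (real CARD('s)) * u * lipconst P h * (real CARD('s) + 1)) * infnorm (x - x')
      + E + real H * rmax H r * sqrt 2 ^ CARD('s) * real N powr (- ln (real N))"
proof -
  define d where "d = infnorm (x - x')"
  define y where "y = \<pi> x h"
  have x_Delta: "x \<in> Delta" "x' \<in> Delta"
    using x x' by (simp_all add: nbhd_def)
  have y: "y \<in> Yset \<alpha> x" "infnorm (y - ys h) \<le> rad N h"
    using optimalD(1,3)[OF opt h] x_Delta x by (auto simp: y_def)
  obtain y' where y': "y' \<in> Yset \<alpha> x'" "infnorm (y' - ys h) \<le> rad N h"
    and y'_close: "infnorm (y - y') \<le> (real CARD('s) + 1) * d"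
    using Yset_coupling[OF y optimalD(1)[OF opt h x_Delta(2)] optimalD(3)[OF opt h x']]
    by (auto simp: d_def infnorm_sub)
  have "V N \<pi> h x - V N \<pi> h x' \<le> (reward r h y - reward r h y')
      + ((\<integral>z. V N \<pi> (Suc h) (next_state N P h y z) \<partial>noise h)
         - (\<integral>z. V N \<pi> (Suc h) (next_state N P h y' z) \<partial>noise h))"
    using Vtil_eq[OF h, of N P r ys \<pi> x] deviation_le_Vtil[OF opt h x' y'] by (simp add: y_def)
  moreover have "\<bar>r h s a\<bar> \<le> rmax H r" for s a
    using r_nonneg[OF h, of s a] rmax_ge[OF h, of r s a] by simp
  then have "reward r h y - reward r h y' \<le> 2 * rmax H r * real CARD('s) * infnorm (y - y')"
    by (rule reward_diff_le)
  moreover have "2 * rmax H r * real CARD('s) * infnorm (y - y')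
      \<le> 2 * rmax H r * real CARD('s) * ((real CARD('s) + 1) * d)"
    using y'_close rmax_H_r_nonneg by (intro mult_left_mono) auto
  moreover have "u * (sqrt (real CARD('s)) * lipconst P h * infnorm (y - y'))
      \<le> u * (sqrt (real CARD('s)) * lipconst P h * ((real CARD('s) + 1) * d))"
    using y'_close u lipconst_nonneg[of P h] by (intro mult_left_mono) auto
  moreover note expected_continuation_diff_le[OF opt N h Yset_D(1)[OF y(1)] y(2) Yset_D(1)[OF y'(1)] y'(2) u E next_lip]
  ultimately show ?thesis
    unfolding d_def by (simp add: algebra_simps)
qed

lemma Vtil_diff_le:
  assumes opt: "optimal N \<pi>" and N: "1 \<le> N" and h: "h \<in> {1..H}"
  shows "\<forall>x\<in>nbhd N h. \<forall>x'\<in>nbhd N h. V N \<pi> h x - V N \<pi> h x'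
    \<le> ufun H P r h * infnorm (x - x')
      + real (Suc H - h) * (real H * rmax H r * sqrt 2 ^ CARD('s) * real N powr (- ln (real N)))"
proof -
  have "h \<le> H"
    using h by simp
  then show ?thesis
  proof (induction h rule: inc_induct)
    case base
    have "V N \<pi> (Suc H) = (\<lambda>_. 0)"
      by (simp add: Vtil_def fun_eq_iff)
    then show ?case
      using Vtil_diff_le_step[OF opt N _ _ _ order_refl order_refl, of H] H_pos
      by (simp add: ufun_last)
  next
    case (step n)
    let ?tail = "real H * rmax H r * sqrt 2 ^ CARD('s) * real N powr (- ln (real N))"
    have n: "n \<in> {1..H}"
      using h step.hyps by simp
    have "V N \<pi> n x - V N \<pi> n x' \<le> ufun H P r n * infnorm (x - x') + real (Suc H - n) * ?tail"
      if "x \<in> nbhd N n" "x' \<in> nbhd N n" for x x'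
    proof -
      have "V N \<pi> n x - V N \<pi> n x'
          \<le> (2 * rmax H r * real CARD('s) * (real CARD('s) + 1)
              + sqrt (real CARD('s)) * ufun H P r (Suc n) * lipconst P n * (real CARD('s) + 1)) * infnorm (x - x')
            + real (Suc H - Suc n) * ?tail + ?tail"
        using step.IH rmax_H_r_nonneg
        by (intro Vtil_diff_le_step[OF opt N n that ufun_nonneg[OF rmax_H_r_nonneg]]) auto
      moreover have "real (Suc H - n) = real (Suc H - Suc n) + 1"
        using step.hyps(2) by simp
      ultimately show ?thesis
        by (simp add: ufun_Suc[OF step.hyps(2)] algebra_simps)
    qed
    then show ?case
      by blast
  qed
qed

end

theorem lemma5:
  fixes H :: nat and \<alpha> :: real
    and P :: "nat \<Rightarrow> 's::finite \<Rightarrow> bool \<Rightarrow> 's \<Rightarrow> real"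
    and r :: "nat \<Rightarrow> 's \<Rightarrow> bool \<Rightarrow> real"
    and xini :: "real^'s"
    and xs :: "nat \<Rightarrow> real^'s" and ys :: "nat \<Rightarrow> real^('s \<times> bool)"
    and \<pi>0 :: "real^'s \<Rightarrow> nat \<Rightarrow> real^('s \<times> bool)"
  assumes H: "1 \<le> H"
    and alpha: "0 < \<alpha>" "\<alpha> < 1"
    and P_nonneg: "\<And>h s a s'. h \<in> {1..H} \<Longrightarrow> 0 \<le> P h s a s'"
    and P_sum: "\<And>h s a. h \<in> {1..H} \<Longrightarrow> (\<Sum>s'\<in>UNIV. P h s a s') = 1"
    and r_nonneg: "\<And>h s a. h \<in> {1..H} \<Longrightarrow> 0 \<le> r h s a"
    and xini: "xini \<in> Delta"
    and LP_feas: "lp_feasible H \<alpha> P xini xs ys"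
    and LP_supp: "\<And>h. h \<notin> {1..H} \<Longrightarrow> ys h = 0"
    and LP_opt: "\<And>y. y \<in> lp_U H \<alpha> P xini \<Longrightarrow> lp_value H r y \<le> lp_value H r ys"
    and sigma_pos: "0 < sigma H \<alpha> P xini r ys"
    and pi0: "policy_valid H \<alpha> \<pi>0"
  shows "\<exists>C N0. \<forall>N::nat. N \<ge> N0 \<longrightarrow> (\<exists>m::nat. \<alpha> * real N = real m) \<longrightarrow>
           (\<forall>\<pi>. locally_SP_optimal H \<alpha> P r xini xs ys \<pi>0 N \<pi> \<longrightarrow>
             (\<forall>h\<in>{1..H}. \<forall>x x'.
                x \<in> Delta \<and> infnorm (x - xs h) \<le> zfun H \<alpha> P xini r ys h * deltaN N \<and>
                x' \<in> Delta \<and> infnorm (x' - xs h) \<le> zfun H \<alpha> P xini r ys h * deltaN N \<longrightarrow>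
                \<bar>Vtil H N P r ys \<pi> h x - Vtil H N P r ys \<pi> h x'\<bar>
                  \<le> ufun H P r h * infnorm (x - x') + C * real N powr (- ln (real N))))"
proof -
  interpret rmab_fluid_path H \<alpha> P r xini xs ys \<pi>0
    using H P_nonneg P_sum r_nonneg LP_feas by unfold_locales
  define tail where "tail N = real H * rmax H r * sqrt 2 ^ CARD('s) * real N powr (- ln (real N))" for N
  show ?thesis
  proof (intro exI[of _ "real H * (real H * rmax H r * sqrt 2 ^ CARD('s))"] exI[of _ "1::nat"] allI impI ballI)
    fix N :: nat and \<pi> h x x'
    assume N: "1 \<le> N" and "\<exists>m::nat. \<alpha> * real N = real m" and opt: "optimal N \<pi>" and h: "h \<in> {1..H}"
      and "x \<in> Delta \<and> infnorm (x - xs h) \<le> zfun H \<alpha> P xini r ys h * deltaN N \<and>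
        x' \<in> Delta \<and> infnorm (x' - xs h) \<le> zfun H \<alpha> P xini r ys h * deltaN N"
    then have "x \<in> nbhd N h" "x' \<in> nbhd N h"
      by (simp_all add: nbhd_def)
    then have "V N \<pi> h x - V N \<pi> h x' \<le> ufun H P r h * infnorm (x - x') + real (Suc H - h) * tail N"
      and "V N \<pi> h x' - V N \<pi> h x \<le> ufun H P r h * infnorm (x - x') + real (Suc H - h) * tail N"
      using Vtil_diff_le[OF opt N h] by (auto simp: tail_def infnorm_sub)
    moreover have "real (Suc H - h) * tail N \<le> real H * tail N"
      using h rmax_H_r_nonneg by (intro mult_right_mono) (auto simp: tail_def)
    ultimately show "\<bar>V N \<pi> h x - V N \<pi> h x'\<bar>
        \<le> ufun H P r h * infnorm (x - x') + real H * (real H * rmax H r * sqrt 2 ^ CARD('s)) * real N powr (- ln (real N))"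
      by (simp add: tail_def abs_le_iff mult.assoc)
  qed
qed

end
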